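(* Let $\Gamma=((V,E),m)$ be an EAFC system with $V$ finite, $G=G_\Gamma$, and $Y\subseteq G$. Then $N_G(Y):=\{g\in G \mid gYg^{-1}=Y\}$ is contained in $N_G(P(Y))$.
   Context: An Artin–Tits system $\Gamma=((V,E),m)$ consists of a simplicial graph $(V,E)$ and a labelling $m\colon E\to\{2,3,\dots\}$; $G_\Gamma=\langle V \mid \mathrm{prod}(u,v,m(\{u,v\}))=\mathrm{prod}(v,u,m(\{u,v\}))\ \forall \{u,v\}\in E\rangle$, where $\mathrm{prod}(u,v,n)$ is the prefix of length $n$ of $uvuv\cdots$. An EAFC system has all labels even and among any three pairwise adjacent vertices at least two of the three edges have label $2$. For $S\subseteq V$, $G_S=\langle S\rangle$; a parabolic subgroup is a subgroup $gG_Sg^{-1}$ with $g\in G_\Gamma$, $S\subseteq V$. $P(Y)$ is the intersection of all parabolic subgroups of $G_\Gamma$ containing $Y$. *)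

theory Defs
  imports "HOL-Algebra.Algebra"
begin

definition artin_system :: "'v set \<Rightarrow> 'v set set \<Rightarrow> ('v set \<Rightarrow> nat) \<Rightarrow> bool" where
  "artin_system V E m \<longleftrightarrow>
     (\<forall>e\<in>E. e \<subseteq> V \<and> card e = 2) \<and> (\<forall>e\<in>E. m e \<ge> 2)"

definition EAFC :: "'v set \<Rightarrow> 'v set set \<Rightarrow> ('v set \<Rightarrow> nat) \<Rightarrow> bool" where
  "EAFC V E m \<longleftrightarrow> artin_system V E m \<and>
     (\<forall>e\<in>E. even (m e)) \<and>
     (\<forall>a b c. {a,b} \<in> E \<and> {b,c} \<in> E \<and> {a,c} \<in> E \<longrightarrow>
        2 \<le> card {e \<in> {{a,b},{b,c},{a,c}}. m e = 2})"

text \<open>Words: letters (v, False) = v, (v, True) = v^{-1}.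
  prod u v n = prefix of length n of u v u v ...\<close>

definition alt_prod :: "'v \<Rightarrow> 'v \<Rightarrow> nat \<Rightarrow> ('v \<times> bool) list" where
  "alt_prod u v n = map (\<lambda>i. if even i then (u, False) else (v, False)) [0..<n]"

inductive_set artin_rel :: "'v set \<Rightarrow> 'v set set \<Rightarrow> ('v set \<Rightarrow> nat)
    \<Rightarrow> (('v \<times> bool) list \<times> ('v \<times> bool) list) set"
  for V E m where
  refl: "(w, w) \<in> artin_rel V E m"
| sym: "(w, w') \<in> artin_rel V E m \<Longrightarrow> (w', w) \<in> artin_rel V E m"
| trans: "(w, w') \<in> artin_rel V E m \<Longrightarrow> (w', w'') \<in> artin_rel V E m \<Longrightarrow> (w, w'') \<in> artin_rel V E m"
| cancel: "v \<in> V \<Longrightarrow> ([(v, b), (v, \<not> b)], []) \<in> artin_rel V E m"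
| braid: "{u, v} \<in> E \<Longrightarrow> (alt_prod u v (m {u, v}), alt_prod v u (m {u, v})) \<in> artin_rel V E m"
| cong: "(w, w') \<in> artin_rel V E m \<Longrightarrow> (a @ w @ b, a @ w' @ b) \<in> artin_rel V E m"

definition artin_class :: "'v set \<Rightarrow> 'v set set \<Rightarrow> ('v set \<Rightarrow> nat)
    \<Rightarrow> ('v \<times> bool) list \<Rightarrow> ('v \<times> bool) list set" where
  "artin_class V E m w = {w'. (w, w') \<in> artin_rel V E m}"

definition artin_group :: "'v set \<Rightarrow> 'v set set \<Rightarrow> ('v set \<Rightarrow> nat)
    \<Rightarrow> ('v \<times> bool) list set monoid" where
  "artin_group V E m =
     \<lparr> carrier = artin_class V E m ` lists (V \<times> UNIV),
       monoid.mult = (\<lambda>A B. artin_class V E m ((SOME a. a \<in> A) @ (SOME b. b \<in> B))),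
       monoid.one = artin_class V E m [] \<rparr>"

definition artin_gen :: "'v set \<Rightarrow> 'v set set \<Rightarrow> ('v set \<Rightarrow> nat)
    \<Rightarrow> 'v \<Rightarrow> ('v \<times> bool) list set" where
  "artin_gen V E m v = artin_class V E m [(v, False)]"

definition conj_set :: "('a, 'b) monoid_scheme \<Rightarrow> 'a \<Rightarrow> 'a set \<Rightarrow> 'a set" where
  "conj_set G g Y = (\<lambda>y. g \<otimes>\<^bsub>G\<^esub> y \<otimes>\<^bsub>G\<^esub> inv\<^bsub>G\<^esub> g) ` Y"

definition normalizer_set :: "('a, 'b) monoid_scheme \<Rightarrow> 'a set \<Rightarrow> 'a set" where
  "normalizer_set G Y = {g \<in> carrier G. conj_set G g Y = Y}"

definition std_parabolic :: "'v set \<Rightarrow> 'v set set \<Rightarrow> ('v set \<Rightarrow> nat)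
    \<Rightarrow> 'v set \<Rightarrow> ('v \<times> bool) list set set" where
  "std_parabolic V E m S = generate (artin_group V E m) (artin_gen V E m ` S)"

definition parabolic :: "'v set \<Rightarrow> 'v set set \<Rightarrow> ('v set \<Rightarrow> nat)
    \<Rightarrow> ('v \<times> bool) list set set \<Rightarrow> bool" where
  "parabolic V E m H \<longleftrightarrow> (\<exists>g \<in> carrier (artin_group V E m). \<exists>S \<subseteq> V.
      H = conj_set (artin_group V E m) g (std_parabolic V E m S))"

definition parabolic_closure :: "'v set \<Rightarrow> 'v set set \<Rightarrow> ('v set \<Rightarrow> nat)
    \<Rightarrow> ('v \<times> bool) list set set \<Rightarrow> ('v \<times> bool) list set set" where
  "parabolic_closure V E m Y = \<Inter> {H. parabolic V E m H \<and> Y \<subseteq> H}"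

end

theory Submission
  imports Defs
begin

text \<open>Conjugation permutes the parabolic subgroups, so an element normalising Y permutes
  the parabolic subgroups containing Y and therefore fixes their intersection P(Y). This only
  uses that the parabolic subgroups form a conjugation-invariant family of subsets containing
  the whole group.\<close>

lemma artin_rel_append:
  assumes "(a, a') \<in> artin_rel V E m" "(b, b') \<in> artin_rel V E m"
  shows "(a @ b, a' @ b') \<in> artin_rel V E m"
proof -
  have "([] @ a @ b, [] @ a' @ b) \<in> artin_rel V E m" by (rule artin_rel.cong[OF assms(1)])
  moreover have "(a' @ b @ [], a' @ b' @ []) \<in> artin_rel V E m" by (rule artin_rel.cong[OF assms(2)])
  ultimately show ?thesis using artin_rel.trans by fastforce
qed

lemma artin_class_eq:
  "(w, w') \<in> artin_rel V E m \<Longrightarrow> artin_class V E m w = artin_class V E m w'"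
  unfolding artin_class_def by (auto intro: artin_rel.trans artin_rel.sym)

lemma in_artin_class: "w \<in> artin_class V E m w"
  unfolding artin_class_def by (auto intro: artin_rel.refl)

lemma artin_class_mult:
  "artin_class V E m a \<otimes>\<^bsub>artin_group V E m\<^esub> artin_class V E m b = artin_class V E m (a @ b)"
proof -
  let ?A = "artin_class V E m a" and ?B = "artin_class V E m b"
  have "(SOME x. x \<in> ?A) \<in> ?A" by (rule someI, rule in_artin_class)
  hence a: "(a, SOME x. x \<in> ?A) \<in> artin_rel V E m" by (simp add: artin_class_def)
  have "(SOME x. x \<in> ?B) \<in> ?B" by (rule someI, rule in_artin_class)
  hence b: "(b, SOME x. x \<in> ?B) \<in> artin_rel V E m" by (simp add: artin_class_def)
  show ?thesis
    unfolding artin_group_def using artin_class_eq[OF artin_rel_append[OF a b]] by simp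
qed

lemma artin_group_one: "\<one>\<^bsub>artin_group V E m\<^esub> = artin_class V E m []"
  by (simp add: artin_group_def)

lemma artin_class_in_carrier:
  "w \<in> lists (V \<times> UNIV) \<Longrightarrow> artin_class V E m w \<in> carrier (artin_group V E m)"
  by (simp add: artin_group_def)

lemma artin_gen_in_carrier: "v \<in> V \<Longrightarrow> artin_gen V E m v \<in> carrier (artin_group V E m)"
  unfolding artin_gen_def by (rule artin_class_in_carrier) simp

definition word_inv :: "('v \<times> bool) list \<Rightarrow> ('v \<times> bool) list" where
  "word_inv w = rev (map (\<lambda>(v, b). (v, \<not> b)) w)"

lemma word_inv_in_lists: "w \<in> lists (V \<times> UNIV) \<Longrightarrow> word_inv w \<in> lists (V \<times> UNIV)"
  unfolding word_inv_def by auto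

lemma artin_rel_word_inv_append:
  "w \<in> lists (V \<times> UNIV) \<Longrightarrow> (word_inv w @ w, []) \<in> artin_rel V E m"
proof (induction w)
  case Nil
  then show ?case by (simp add: word_inv_def artin_rel.refl)
next
  case (Cons x w)
  obtain v b where x: "x = (v, b)" by (cases x)
  have v: "v \<in> V" using Cons.prems x by auto
  have "(word_inv w @ [(v, \<not> b), (v, \<not> \<not> b)] @ w, word_inv w @ [] @ w) \<in> artin_rel V E m"
    by (rule artin_rel.cong[OF artin_rel.cancel[OF v]])
  moreover have "word_inv (x # w) @ x # w = word_inv w @ [(v, \<not> b), (v, \<not> \<not> b)] @ w"
    by (simp add: word_inv_def x)
  ultimately show ?case using Cons artin_rel.trans by fastforce
qed

lemma group_artin_group: "group (artin_group V E m)"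
proof (rule groupI)
  let ?G = "artin_group V E m"
  have carrier_obtain: "\<exists>a \<in> lists (V \<times> UNIV). x = artin_class V E m a" if "x \<in> carrier ?G" for x
    using that by (auto simp: artin_group_def)
  show "x \<otimes>\<^bsub>?G\<^esub> y \<in> carrier ?G" if x: "x \<in> carrier ?G" and y: "y \<in> carrier ?G" for x y
  proof -
    obtain a b where "a \<in> lists (V \<times> UNIV)" "b \<in> lists (V \<times> UNIV)"
      and "x = artin_class V E m a" "y = artin_class V E m b"
      using carrier_obtain[OF x] carrier_obtain[OF y] by blast
    then show ?thesis by (simp add: artin_class_mult artin_class_in_carrier)
  qed
  show "\<one>\<^bsub>?G\<^esub> \<in> carrier ?G"
    by (simp add: artin_group_one artin_class_in_carrier)
  show "x \<otimes>\<^bsub>?G\<^esub> y \<otimes>\<^bsub>?G\<^esub> z = x \<otimes>\<^bsub>?G\<^esub> (y \<otimes>\<^bsub>?G\<^esub> z)"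
    if "x \<in> carrier ?G" "y \<in> carrier ?G" "z \<in> carrier ?G" for x y z
    using carrier_obtain[OF that(1)] carrier_obtain[OF that(2)] carrier_obtain[OF that(3)]
    by (auto simp: artin_class_mult)
  show "\<one>\<^bsub>?G\<^esub> \<otimes>\<^bsub>?G\<^esub> x = x" if "x \<in> carrier ?G" for x
    using carrier_obtain[OF that] by (auto simp: artin_group_one artin_class_mult)
  show "\<exists>y \<in> carrier ?G. y \<otimes>\<^bsub>?G\<^esub> x = \<one>\<^bsub>?G\<^esub>" if x: "x \<in> carrier ?G" for x
  proof -
    obtain a where a: "a \<in> lists (V \<times> UNIV)" "x = artin_class V E m a"
      using carrier_obtain[OF x] by blast
    have "artin_class V E m (word_inv a) \<otimes>\<^bsub>?G\<^esub> x = \<one>\<^bsub>?G\<^esub>"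
      using a artin_class_eq[OF artin_rel_word_inv_append[OF a(1)]]
      by (simp add: artin_class_mult artin_group_one)
    with artin_class_in_carrier[OF word_inv_in_lists[OF a(1)]] show ?thesis by blast
  qed
qed

lemma inv_artin_gen:
  assumes "v \<in> V"
  shows "inv\<^bsub>artin_group V E m\<^esub> (artin_gen V E m v) = artin_class V E m [(v, True)]"
proof -
  interpret group "artin_group V E m" by (rule group_artin_group)
  have "artin_class V E m [(v, True)] \<otimes>\<^bsub>artin_group V E m\<^esub> artin_gen V E m v
      = \<one>\<^bsub>artin_group V E m\<^esub>"
    using artin_class_eq[OF artin_rel_word_inv_append[of "[(v, False)]" V E m]] assms
    by (simp add: artin_gen_def artin_class_mult artin_group_one word_inv_def)
  moreover have "artin_class V E m [(v, True)] \<in> carrier (artin_group V E m)"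
    using assms by (simp add: artin_class_in_carrier)
  ultimately show ?thesis using inv_equality artin_gen_in_carrier[OF assms] by blast
qed

lemma std_parabolic_subset_carrier:
  assumes "S \<subseteq> V"
  shows "std_parabolic V E m S \<subseteq> carrier (artin_group V E m)"
proof -
  have gens: "artin_gen V E m ` S \<subseteq> carrier (artin_group V E m)"
    using assms by (auto intro: artin_gen_in_carrier)
  show ?thesis
    unfolding std_parabolic_def
    using group.generate_in_carrier[OF group_artin_group gens] by (rule subsetI)
qed

lemma std_parabolic_all: "std_parabolic V E m V = carrier (artin_group V E m)"
proof
  let ?G = "artin_group V E m" and ?gens = "artin_gen V E m ` V"
  have "w \<in> lists (V \<times> UNIV) \<Longrightarrow> artin_class V E m w \<in> generate ?G ?gens" for w
  proof (induction w)
    case Nil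
    then show ?case using generate.one[of ?G ?gens] by (simp add: artin_group_one)
  next
    case (Cons x w)
    obtain v b where x: "x = (v, b)" by (cases x)
    have v: "v \<in> V" using Cons.prems x by auto
    have "artin_class V E m [x] \<in> generate ?G ?gens"
    proof (cases b)
      case True
      then show ?thesis
        using generate.inv[of "artin_gen V E m v" ?gens ?G] inv_artin_gen[OF v] v x by simp
    next
      case False
      then show ?thesis
        using generate.incl[of "artin_gen V E m v" ?gens ?G] v x by (simp add: artin_gen_def)
    qed
    from generate.eng[OF this Cons.IH] Cons.prems show ?case by (simp add: artin_class_mult)
  qed
  then show "carrier ?G \<subseteq> std_parabolic V E m V"
    by (auto simp: artin_group_def std_parabolic_def)
qed (rule std_parabolic_subset_carrier[OF order_refl])

lemma (in group) conj_set_conj_set: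
  assumes "A \<subseteq> carrier G" "g \<in> carrier G" "h \<in> carrier G"
  shows "conj_set G g (conj_set G h A) = conj_set G (g \<otimes> h) A"
  unfolding conj_set_def image_image
proof (rule image_cong[OF HOL.refl])
  fix y assume "y \<in> A"
  with assms show "g \<otimes> (h \<otimes> y \<otimes> inv h) \<otimes> inv g = g \<otimes> h \<otimes> y \<otimes> inv (g \<otimes> h)"
    by (auto simp: inv_mult_group m_assoc)
qed

lemma (in group) conj_set_one: "A \<subseteq> carrier G \<Longrightarrow> conj_set G \<one> A = A"
  unfolding conj_set_def by (auto simp: image_iff) (metis l_one r_one subsetD)

lemma (in group) conj_set_subset_carrier:
  "A \<subseteq> carrier G \<Longrightarrow> g \<in> carrier G \<Longrightarrow> conj_set G g A \<subseteq> carrier G"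
  unfolding conj_set_def by auto

lemma (in group) conj_set_inv_conj_set:
  "A \<subseteq> carrier G \<Longrightarrow> g \<in> carrier G \<Longrightarrow> conj_set G (inv g) (conj_set G g A) = A"
  "A \<subseteq> carrier G \<Longrightarrow> g \<in> carrier G \<Longrightarrow> conj_set G g (conj_set G (inv g) A) = A"
  by (simp_all add: conj_set_conj_set conj_set_one)

lemma (in group) conj_set_Inter_closure_subset:
  assumes conj_closed: "\<And>H g. P H \<Longrightarrow> g \<in> carrier G \<Longrightarrow> P (conj_set G g H)"
    and subset_carrier: "\<And>H. P H \<Longrightarrow> H \<subseteq> carrier G"
    and "Y \<subseteq> carrier G" "g \<in> carrier G" "conj_set G g Y = Y"
  shows "conj_set G g (\<Inter> {H. P H \<and> Y \<subseteq> H}) \<subseteq> \<Inter> {H. P H \<and> Y \<subseteq> H}"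
proof (intro subsetI InterI)
  fix x H assume x: "x \<in> conj_set G g (\<Inter> {H. P H \<and> Y \<subseteq> H})" and "H \<in> {H. P H \<and> Y \<subseteq> H}"
  hence H: "P H" "Y \<subseteq> H" by auto
  let ?H' = "conj_set G (inv g) H"
  have "Y = conj_set G (inv g) Y"
    using conj_set_inv_conj_set(1)[OF assms(3,4)] assms(5) by simp
  also have "\<dots> \<subseteq> ?H'" unfolding conj_set_def using H(2) by (rule image_mono)
  finally have "\<Inter> {H. P H \<and> Y \<subseteq> H} \<subseteq> ?H'" using conj_closed[OF H(1)] assms(4) by blast
  hence "x \<in> conj_set G g ?H'" using x unfolding conj_set_def by blast
  thus "x \<in> H" using conj_set_inv_conj_set(2)[OF subset_carrier[OF H(1)] assms(4)] by simp
qed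

lemma (in group) normalizer_subset_normalizer_Inter_closure:
  assumes conj_closed: "\<And>H g. P H \<Longrightarrow> g \<in> carrier G \<Longrightarrow> P (conj_set G g H)"
    and subset_carrier: "\<And>H. P H \<Longrightarrow> H \<subseteq> carrier G"
    and "P (carrier G)" "Y \<subseteq> carrier G"
  shows "normalizer_set G Y \<subseteq> normalizer_set G (\<Inter> {H. P H \<and> Y \<subseteq> H})"
proof
  let ?C = "\<Inter> {H. P H \<and> Y \<subseteq> H}"
  fix g assume "g \<in> normalizer_set G Y"
  hence g: "g \<in> carrier G" and gY: "conj_set G g Y = Y" by (auto simp: normalizer_set_def)
  have C: "?C \<subseteq> carrier G" using assms(3,4) by blast
  have "conj_set G (inv g) Y = Y" using conj_set_inv_conj_set(1)[OF assms(4) g] gY by simp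
  have "?C = conj_set G g (conj_set G (inv g) ?C)" using conj_set_inv_conj_set(2)[OF C g] by simp
  also have "\<dots> \<subseteq> conj_set G g ?C"
    using conj_closed subset_carrier assms(4) inv_closed[OF g] \<open>conj_set G (inv g) Y = Y\<close>
    unfolding conj_set_def[of G g] by (intro image_mono conj_set_Inter_closure_subset)
  moreover have "conj_set G g ?C \<subseteq> ?C"
    using conj_closed subset_carrier assms(4) g gY by (rule conj_set_Inter_closure_subset)
  ultimately have "conj_set G g ?C = ?C" by blast
  with g show "g \<in> normalizer_set G ?C" by (simp add: normalizer_set_def)
qed

lemma parabolic_subset_carrier: "parabolic V E m H \<Longrightarrow> H \<subseteq> carrier (artin_group V E m)"
  unfolding parabolic_def
  using group.conj_set_subset_carrier[OF group_artin_group] std_parabolic_subset_carrier by blast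

lemma parabolic_conj_set:
  assumes "parabolic V E m H" "g \<in> carrier (artin_group V E m)"
  shows "parabolic V E m (conj_set (artin_group V E m) g H)"
proof -
  interpret group "artin_group V E m" by (rule group_artin_group)
  obtain h S where h: "h \<in> carrier (artin_group V E m)" "S \<subseteq> V"
    and H: "H = conj_set (artin_group V E m) h (std_parabolic V E m S)"
    using assms(1) unfolding parabolic_def by blast
  have "conj_set (artin_group V E m) g H
      = conj_set (artin_group V E m) (g \<otimes>\<^bsub>artin_group V E m\<^esub> h) (std_parabolic V E m S)"
    using H h assms(2) std_parabolic_subset_carrier[OF h(2)] conj_set_conj_set by simp
  with h assms(2) show ?thesis
    unfolding parabolic_def
    by (intro bexI[of _ "g \<otimes>\<^bsub>artin_group V E m\<^esub> h"] exI[of _ S]) simp_all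
qed

lemma parabolic_carrier: "parabolic V E m (carrier (artin_group V E m))"
proof -
  interpret group "artin_group V E m" by (rule group_artin_group)
  have "carrier (artin_group V E m)
      = conj_set (artin_group V E m) \<one>\<^bsub>artin_group V E m\<^esub> (std_parabolic V E m V)"
    by (simp add: std_parabolic_all conj_set_one)
  then show ?thesis
    unfolding parabolic_def by (intro bexI[OF _ one_closed] exI[of _ V]) simp
qed

theorem lemma2p4:
  fixes V :: "'v set" and E :: "'v set set" and m :: "'v set \<Rightarrow> nat"
    and Y :: "('v \<times> bool) list set set"
  assumes "EAFC V E m"
    and "finite V"
    and "Y \<subseteq> carrier (artin_group V E m)"
  shows "normalizer_set (artin_group V E m) Y
           \<subseteq> normalizer_set (artin_group V E m) (parabolic_closure V E m Y)"
  unfolding parabolic_closure_def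
  by (rule group.normalizer_subset_normalizer_Inter_closure[OF group_artin_group
        parabolic_conj_set parabolic_subset_carrier parabolic_carrier assms(3)])

end
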